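(* Let $G$ be a finite simple cubic (3-regular) graph that has no subgraph (not necessarily induced) isomorphic to the graph $L$. Then $V(G)$ can be partitioned into two total dominating sets; equivalently, there is a partition $V(G)=S_1\cup S_2$, $S_1\cap S_2=\emptyset$, such that every vertex of $G$ has at least one neighbor in $S_1$ and at least one neighbor in $S_2$. In other words, the total domatic number $d_t(G)$ (equivalently, the coupon coloring number of $G$) is at least $2$.
   Context: All graphs are finite and simple. A total dominating set of a graph $G$ is a set $T\subseteq V(G)$ such that every vertex $v\in V(G)$ is adjacent to at least one vertex of $T$. The total domatic number $d_t(G)$ is the maximum number of pairwise disjoint total dominating sets whose union is $V(G)$. The graph $L$ is the tree on $10$ vertices consisting of a central vertex $c$ adjacent to three vertices $x_1,x_2,x_3$, where each $x_i$ is further adjacent to two leaves $y_{i,1},y_{i,2}$ (all ten vertices distinct; $9$ edges). *)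

theory Defs
  imports Main
begin

definition simple_graph :: "'a set \<Rightarrow> ('a \<Rightarrow> 'a \<Rightarrow> bool) \<Rightarrow> bool" where
  "simple_graph V E \<longleftrightarrow> finite V \<and> (\<forall>u v. E u v \<longrightarrow> E v u) \<and> (\<forall>v. \<not> E v v)
     \<and> (\<forall>u v. E u v \<longrightarrow> u \<in> V \<and> v \<in> V)"

definition neighbours :: "'a set \<Rightarrow> ('a \<Rightarrow> 'a \<Rightarrow> bool) \<Rightarrow> 'a \<Rightarrow> 'a set" where
  "neighbours V E v = {u \<in> V. E v u}"

definition cubic :: "'a set \<Rightarrow> ('a \<Rightarrow> 'a \<Rightarrow> bool) \<Rightarrow> bool" where
  "cubic V E \<longleftrightarrow> (\<forall>v\<in>V. card (neighbours V E v) = 3)"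

definition total_dominating :: "'a set \<Rightarrow> ('a \<Rightarrow> 'a \<Rightarrow> bool) \<Rightarrow> 'a set \<Rightarrow> bool" where
  "total_dominating V E T \<longleftrightarrow> T \<subseteq> V \<and> (\<forall>v\<in>V. \<exists>u\<in>T. E v u)"

text \<open>The graph L on vertices 0..9: centre 0, middle vertices 1,2,3, where
  vertex i (1..3) has leaves 2*i+2 and 2*i+3.\<close>
definition L_verts :: "nat set" where
  "L_verts = {0..9}"

definition L_edge :: "nat \<Rightarrow> nat \<Rightarrow> bool" where
  "L_edge a b \<longleftrightarrow> (\<exists>i\<in>{1,2,3}. {a,b} = {0,i} \<or> {a,b} = {i, 2*i+2} \<or> {a,b} = {i, 2*i+3})"

definition has_L_subgraph :: "'a set \<Rightarrow> ('a \<Rightarrow> 'a \<Rightarrow> bool) \<Rightarrow> bool" where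
  "has_L_subgraph V E \<longleftrightarrow> (\<exists>f. inj_on f L_verts \<and> f ` L_verts \<subseteq> V \<and>
      (\<forall>a\<in>L_verts. \<forall>b\<in>L_verts. L_edge a b \<longrightarrow> E (f a) (f b)))"

end

theory Submission
  imports Defs Complex_Main
begin

text \<open>Call a 2-colouring of a cubic graph a coupon colouring if every open neighbourhood
  contains both colours; its colour classes are then two disjoint total dominating sets.
  By Seymour's criterion a family of finite sets has a 2-colouring without monochromatic
  member as soon as every nonempty subfamily covers more points than it has members.

  Work in one component at a time. Absence of \<open>L\<close> forces every vertex onto a triangle or
  onto a 4-cycle through two of its neighbours. If there is a 4-cycle \<open>vawb\<close>, or else (all
  triangles are then disjoint) two triangles joined by an edge, prescribe different colours
  on a few pairs of these vertices and demand both colours on the neighbourhood of every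
  other vertex. Seymour's criterion for this family follows by double counting the edges
  between a set \<open>Y\<close> of vertices and its neighbourhood: in a connected cubic graph the
  neighbourhood exceeds \<open>Y\<close> by a third of the total deficit, and the special vertices
  contribute enough deficit to pay for the pairs.\<close>

section \<open>Seymour's criterion for 2-colouring a set family\<close>

lemma underdetermined_homogeneous_system_solvable:
  fixes a :: "'e \<Rightarrow> 'a \<Rightarrow> 'k::field"
  assumes "finite Eqs" "finite X" "card Eqs < card X"
  shows "\<exists>x. (\<forall>u. u \<notin> X \<longrightarrow> x u = 0) \<and> (\<exists>u\<in>X. x u \<noteq> 0) \<and>
             (\<forall>e\<in>Eqs. (\<Sum>u\<in>X. a e u * x u) = 0)"
  using assms
proof (induction Eqs arbitrary: X a rule: finite_induct)
  case empty
  then obtain u0 where "u0 \<in> X" by fastforce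
  then show ?case
    by (intro exI[of _ "\<lambda>u. if u = u0 then 1 else 0"]) auto
next
  case (insert e0 Eqs)
  show ?case
  proof (cases "\<forall>u\<in>X. a e0 u = 0")
    case True
    have "card Eqs < card X" using insert by simp
    with insert.IH[OF insert.prems(1)] obtain x where
      "\<forall>u. u \<notin> X \<longrightarrow> x u = 0" "\<exists>u\<in>X. x u \<noteq> 0" "\<forall>e\<in>Eqs. (\<Sum>u\<in>X. a e u * x u) = 0"
      by blast
    with True show ?thesis by (intro exI[of _ x]) auto
  next
    case False
    then obtain u0 where u0: "u0 \<in> X" "a e0 u0 \<noteq> 0" by blast
    define X' where "X' = X - {u0}"
    define a' where "a' = (\<lambda>e u. a e u - a e u0 * a e0 u / a e0 u0)"
    have "finite X'" "card Eqs < card X'" using insert u0 by (simp_all add: X'_def)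
    with insert.IH obtain x' where x':
      "\<forall>u. u \<notin> X' \<longrightarrow> x' u = 0" "\<exists>u\<in>X'. x' u \<noteq> 0" "\<forall>e\<in>Eqs. (\<Sum>u\<in>X'. a' e u * x' u) = 0"
      by blast
    define S where "S = (\<Sum>u\<in>X'. a e0 u * x' u)"
    define x where "x = x'(u0 := - S / a e0 u0)"
    have sum_split: "(\<Sum>u\<in>X. g u * x u) = g u0 * x u0 + (\<Sum>u\<in>X'. g u * x' u)" for g
    proof -
      have "(\<Sum>u\<in>X. g u * x u) = g u0 * x u0 + (\<Sum>u\<in>X'. g u * x u)"
        using u0 insert by (simp add: X'_def sum.remove)
      also have "(\<Sum>u\<in>X'. g u * x u) = (\<Sum>u\<in>X'. g u * x' u)"
        by (rule sum.cong) (auto simp: x_def X'_def)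
      finally show ?thesis .
    qed
    have "\<forall>u. u \<notin> X \<longrightarrow> x u = 0" using x' u0 by (auto simp: x_def X'_def)
    moreover have "\<exists>u\<in>X. x u \<noteq> 0" using x'(2) by (auto simp: x_def X'_def)
    moreover have "(\<Sum>u\<in>X. a e0 u * x u) = 0"
      using u0 unfolding sum_split S_def[symmetric] by (simp add: x_def)
    moreover have "(\<Sum>u\<in>X. a e u * x u) = 0" if "e \<in> Eqs" for e
    proof -
      define r where "r = a e u0 / a e0 u0"
      have "a' e u * x' u = a e u * x' u - r * (a e0 u * x' u)" for u
        by (simp add: a'_def r_def algebra_simps)
      then have "(\<Sum>u\<in>X'. a' e u * x' u) = (\<Sum>u\<in>X'. a e u * x' u) - r * S"
        by (simp add: S_def sum_subtractf sum_distrib_left)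
      then have "(\<Sum>u\<in>X'. a e u * x' u) = r * S" using x'(3) that by simp
      then show ?thesis using u0(2) unfolding sum_split by (simp add: x_def r_def field_simps)
    qed
    ultimately show ?thesis by blast
  qed
qed

lemma sum_eq_0_imp_pos_and_neg:
  fixes x :: "'a \<Rightarrow> 'b::linordered_ab_group_add"
  assumes "finite A" "(\<Sum>u\<in>A. x u) = 0" "u \<in> A" "x u \<noteq> 0"
  shows "\<exists>w\<in>A. x w > 0" "\<exists>w\<in>A. x w < 0"
proof -
  have sum: "x u + (\<Sum>w\<in>A - {u}. x w) = 0" using assms by (simp add: sum.remove)
  show "\<exists>w\<in>A. x w > 0"
  proof (rule ccontr)
    assume "\<not> ?thesis"
    then have "\<forall>w\<in>A. x w \<le> 0" by (simp add: not_less)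
    then have "x u < 0" "(\<Sum>w\<in>A - {u}. x w) \<le> 0"
      using assms(3,4) by (auto intro: sum_nonpos simp: order.strict_iff_order)
    with sum show False by (metis add_neg_nonpos less_irrefl)
  qed
  show "\<exists>w\<in>A. x w < 0"
  proof (rule ccontr)
    assume "\<not> ?thesis"
    then have "\<forall>w\<in>A. x w \<ge> 0" by (simp add: not_less)
    then have "x u > 0" "(\<Sum>w\<in>A - {u}. x w) \<ge> 0"
      using assms(3,4) by (auto intro: sum_nonneg simp: order.strict_iff_order)
    with sum show False by (metis add_pos_nonneg less_irrefl)
  qed
qed

lemma balanced_weighting_exists:
  assumes "finite F" "\<forall>f\<in>F. finite f" "card F < card (\<Union>F)"
  shows "\<exists>x :: 'a \<Rightarrow> real. (\<exists>u\<in>\<Union>F. x u \<noteq> 0) \<and> (\<forall>f\<in>F. (\<Sum>u\<in>f. x u) = 0)"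
proof -
  define X where "X = \<Union>F"
  have "finite X" using assms(1,2) by (auto simp: X_def)
  then obtain x :: "'a \<Rightarrow> real" where x: "\<exists>u\<in>X. x u \<noteq> 0"
    "\<forall>f\<in>F. (\<Sum>u\<in>X. (if u \<in> f then 1 else 0) * x u) = 0"
    using underdetermined_homogeneous_system_solvable[OF assms(1),
        of X "\<lambda>f u. if u \<in> f then 1 else 0"] assms(3) by (auto simp: X_def)
  have "(\<Sum>u\<in>f. x u) = 0" if "f \<in> F" for f
  proof -
    have "(\<Sum>u\<in>X. (if u \<in> f then 1 else 0) * x u) = (\<Sum>u\<in>X. if u \<in> f then x u else 0)"
      by (rule sum.cong) auto
    also have "\<dots> = (\<Sum>u\<in>X \<inter> f. x u)" using \<open>finite X\<close> by (simp add: sum.inter_restrict)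
    also have "X \<inter> f = f" using that by (auto simp: X_def)
    finally show ?thesis using x(2) that by simp
  qed
  with x(1) show ?thesis by (auto simp: X_def)
qed

text \<open>A nonzero solution of the system
  \<open>\<Sum>u\<in>f. x u = 0\<close> (fewer equations than unknowns) colours its support by sign; the members
  missing the support are coloured by induction.\<close>
lemma two_colouring_if_surplus:
  assumes "finite F" "\<forall>f\<in>F. finite f"
    and "\<forall>G\<subseteq>F. G \<noteq> {} \<longrightarrow> card G < card (\<Union>G)"
  shows "\<exists>col::'a \<Rightarrow> bool. \<forall>f\<in>F. \<exists>u\<in>f. \<exists>u'\<in>f. col u \<noteq> col u'"
  using assms
proof (induction "card F" arbitrary: F rule: less_induct)
  case less
  show ?case
  proof (cases "F = {}")
    case True then show ?thesis by auto
  next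
    case False
    have "card F < card (\<Union>F)" using less.prems(3) False by blast
    then obtain x :: "'a \<Rightarrow> real" where x: "\<exists>u\<in>\<Union>F. x u \<noteq> 0" "\<And>f. f \<in> F \<Longrightarrow> (\<Sum>u\<in>f. x u) = 0"
      using balanced_weighting_exists[OF less.prems(1,2)] by blast
    define F' where "F' = {f\<in>F. \<forall>u\<in>f. x u = 0}"
    obtain u0 f0 where "f0 \<in> F" "u0 \<in> f0" "x u0 \<noteq> 0" using x(1) by blast
    then have "F' \<subset> F" by (auto simp: F'_def)
    then have "card F' < card F" using less.prems(1) by (simp add: psubset_card_mono)
    moreover have "finite F'" using less.prems(1) \<open>F' \<subset> F\<close> finite_subset by blast
    moreover have "\<forall>f\<in>F'. finite f" "\<forall>G\<subseteq>F'. G \<noteq> {} \<longrightarrow> card G < card (\<Union>G)"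
      using less.prems(2,3) \<open>F' \<subset> F\<close> by blast+
    ultimately have "\<exists>col' :: 'a \<Rightarrow> bool. \<forall>f\<in>F'. \<exists>u\<in>f. \<exists>u'\<in>f. col' u \<noteq> col' u'"
      by (rule less.hyps)
    then obtain col' :: "'a \<Rightarrow> bool" where col': "\<forall>f\<in>F'. \<exists>u\<in>f. \<exists>u'\<in>f. col' u \<noteq> col' u'"
      by blast
    define col where "col u = (if x u = 0 then col' u else x u > 0)" for u
    have "\<exists>u\<in>f. \<exists>u'\<in>f. col u \<noteq> col u'" if f: "f \<in> F" for f
    proof (cases "f \<in> F'")
      case True
      then obtain u u' where "u \<in> f" "u' \<in> f" "col' u \<noteq> col' u'" using col' by blast
      with True show ?thesis by (auto simp: col_def F'_def)
    next
      case False
      then obtain u where "u \<in> f" "x u \<noteq> 0" using f by (auto simp: F'_def)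
      with sum_eq_0_imp_pos_and_neg[OF _ x(2)[OF f]] obtain w1 w2
        where "w1 \<in> f" "x w1 > 0" "w2 \<in> f" "x w2 < 0"
        using less.prems(2) f by blast
      then show ?thesis by (intro bexI[of _ w1] bexI[of _ w2]) (auto simp: col_def)
    qed
    then show ?thesis by blast
  qed
qed

lemma card_3_obtain_others:
  assumes "card A = 3" "v \<in> A"
  obtains p q where "A = {v, p, q}" "p \<noteq> q" "p \<noteq> v" "q \<noteq> v"
proof -
  have "card (A - {v}) = 2" using assms by (simp add: card_gt_0_iff[symmetric])
  then obtain p q where "A - {v} = {p, q}" "p \<noteq> q" by (auto simp: card_2_iff)
  with assms(2) that show ?thesis by blast
qed

lemma card_3_obtain_third:
  assumes "card A = 3" "a \<in> A" "b \<in> A" "a \<noteq> b"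
  obtains e where "A = {a, b, e}" "e \<noteq> a" "e \<noteq> b"
proof -
  obtain p q where A: "A = {a, p, q}" "p \<noteq> q" "p \<noteq> a" "q \<noteq> a"
    using card_3_obtain_others[OF assms(1,2)] by blast
  then have "b = p \<or> b = q" using assms(3,4) by auto
  then show ?thesis
  proof
    assume "b = p"
    then show ?thesis using A by (intro that[of q]) auto
  next
    assume "b = q"
    then show ?thesis using A by (intro that[of p]) auto
  qed
qed

fun has_fresh_elements :: "'a set list \<Rightarrow> bool" where
  "has_fresh_elements [] = True"
| "has_fresh_elements (p # ps) \<longleftrightarrow> (\<exists>u\<in>p. u \<notin> \<Union>(set ps)) \<and> has_fresh_elements ps"

lemma card_less_card_Union_if_fresh_elements:
  assumes "has_fresh_elements ps" "\<forall>p\<in>set ps. finite p \<and> 2 \<le> card p" "Q \<subseteq> set ps" "Q \<noteq> {}"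
  shows "card Q < card (\<Union>Q)"
  using assms
proof (induction ps arbitrary: Q)
  case Nil
  then show ?case by simp
next
  case (Cons p ps)
  have "has_fresh_elements ps" "\<forall>q\<in>set ps. finite q \<and> 2 \<le> card q"
    using Cons.prems(1,2) by simp_all
  note IH = Cons.IH[OF this]
  show ?case
  proof (cases "p \<in> Q")
    case False
    then have "Q \<subseteq> set ps" using Cons.prems(3) by auto
    then show ?thesis using IH Cons.prems(4) by blast
  next
    case True
    define Q' where "Q' = Q - {p}"
    have "Q' \<subseteq> set ps" using Cons.prems(3) by (auto simp: Q'_def)
    have "finite Q" using Cons.prems(3) by (rule finite_subset) simp
    then have card_Q: "card Q = Suc (card Q')" using True unfolding Q'_def by (rule card.remove)
    have Union_Q: "\<Union>Q = p \<union> \<Union>Q'" using True by (auto simp: Q'_def)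
    have "finite Q'" using \<open>finite Q\<close> by (simp add: Q'_def)
    then have "finite (\<Union>Q')" using \<open>Q' \<subseteq> set ps\<close> Cons.prems(2) by auto
    have p: "finite p" "2 \<le> card p" using Cons.prems(2) by simp_all
    show ?thesis
    proof (cases "Q' = {}")
      case True
      with card_Q Union_Q p show ?thesis by simp
    next
      case False
      obtain u where "u \<in> p" "u \<notin> \<Union>Q'" using Cons.prems(1) \<open>Q' \<subseteq> set ps\<close> by auto
      then have "card (insert u (\<Union>Q')) \<le> card (\<Union>Q)"
        using Union_Q p(1) \<open>finite (\<Union>Q')\<close> by (intro card_mono) auto
      with IH[OF \<open>Q' \<subseteq> set ps\<close> False] card_Q \<open>u \<notin> \<Union>Q'\<close> \<open>finite (\<Union>Q')\<close> show ?thesis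
        by simp
    qed
  qed
qed

section \<open>Cubic graphs, neighbourhoods and deficits\<close>

definition coupon_colouring :: "'a set \<Rightarrow> ('a \<Rightarrow> 'a \<Rightarrow> bool) \<Rightarrow> ('a \<Rightarrow> bool) \<Rightarrow> bool" where
  "coupon_colouring V E col \<longleftrightarrow>
     (\<forall>v\<in>V. \<exists>u\<in>neighbours V E v. \<exists>u'\<in>neighbours V E v. col u \<noteq> col u')"

definition neighbour_closed :: "'a set \<Rightarrow> ('a \<Rightarrow> 'a \<Rightarrow> bool) \<Rightarrow> 'a set \<Rightarrow> bool" where
  "neighbour_closed V E S \<longleftrightarrow> S \<subseteq> V \<and> (\<forall>v\<in>S. neighbours V E v \<subseteq> S)"

definition graph_connected :: "'a set \<Rightarrow> ('a \<Rightarrow> 'a \<Rightarrow> bool) \<Rightarrow> bool" where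
  "graph_connected V E \<longleftrightarrow> (\<forall>S. neighbour_closed V E S \<longrightarrow> S \<noteq> {} \<longrightarrow> S = V)"

definition every_vertex_on_short_cycle :: "'a set \<Rightarrow> ('a \<Rightarrow> 'a \<Rightarrow> bool) \<Rightarrow> bool" where
  "every_vertex_on_short_cycle V E \<longleftrightarrow>
     (\<forall>v\<in>V. \<exists>a b. a \<in> neighbours V E v \<and> b \<in> neighbours V E v \<and> a \<noteq> b \<and>
        (E a b \<or> (\<exists>w. w \<noteq> v \<and> E a w \<and> E b w)))"

locale cubic_graph =
  fixes V :: "'a set" and E :: "'a \<Rightarrow> 'a \<Rightarrow> bool"
  assumes simple: "simple_graph V E" and cubic: "cubic V E"
begin

abbreviation N :: "'a \<Rightarrow> 'a set" where "N \<equiv> neighbours V E"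

lemma finite_V: "finite V"
  using simple by (simp add: simple_graph_def)

lemma adj_sym: "E u v \<Longrightarrow> E v u"
  using simple by (simp add: simple_graph_def)

lemma adj_irrefl [simp]: "\<not> E v v"
  using simple by (simp add: simple_graph_def)

lemma adj_neq: "E u v \<Longrightarrow> u \<noteq> v"
  by auto

lemma adj_in_V: "E u v \<Longrightarrow> u \<in> V" "E u v \<Longrightarrow> v \<in> V"
  using simple by (simp_all add: simple_graph_def)

lemma in_N_iff: "u \<in> N v \<longleftrightarrow> E v u"
  using adj_in_V by (auto simp: neighbours_def)

lemma N_subset: "N v \<subseteq> V"
  by (auto simp: neighbours_def)

lemma finite_N: "finite (N v)"
  using finite_V N_subset finite_subset by blast

lemma card_N: "v \<in> V \<Longrightarrow> card (N v) = 3"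
  using cubic by (simp add: cubic_def)

definition Nset :: "'a set \<Rightarrow> 'a set" where
  "Nset Y = (\<Union>y\<in>Y. N y)"

definition deficit :: "'a set \<Rightarrow> 'a \<Rightarrow> nat" where
  "deficit Y u = card (N u - Y)"

lemma Nset_subset: "Nset Y \<subseteq> V"
  using N_subset by (auto simp: Nset_def)

lemma finite_Nset: "finite (Nset Y)"
  using Nset_subset finite_V finite_subset by blast

lemma in_Nset_iff: "u \<in> Nset Y \<longleftrightarrow> (\<exists>y\<in>Y. E y u)"
  by (auto simp: Nset_def in_N_iff)

lemma Nset_empty [simp]: "Nset {} = {}"
  by (simp add: Nset_def)

lemma card_Nset_double_count:
  assumes "Y \<subseteq> V"
  shows "3 * card (Nset Y) = 3 * card Y + (\<Sum>u\<in>Nset Y. deficit Y u)"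
proof -
  have "finite Y" using assms finite_V finite_subset by blast
  have card_N_Int: "card (N u \<inter> Y) = (\<Sum>y\<in>Y. if E u y then 1 else 0)" for u
  proof -
    have "N u \<inter> Y = {y\<in>Y. E u y}" by (auto simp: in_N_iff)
    then show ?thesis using \<open>finite Y\<close> by (simp add: sum.If_cases Int_def)
  qed
  have edges_at: "(\<Sum>u\<in>Nset Y. if E u y then 1 else 0) = (3::nat)" if "y \<in> Y" for y
  proof -
    have "{u\<in>Nset Y. E u y} = N y" using that by (auto simp: in_Nset_iff in_N_iff intro: adj_sym)
    then show ?thesis
      using finite_Nset card_N[of y] that assms by (auto simp: sum.If_cases Int_def)
  qed
  have "(\<Sum>u\<in>Nset Y. card (N u \<inter> Y)) = (\<Sum>u\<in>Nset Y. \<Sum>y\<in>Y. if E u y then 1 else 0)"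
    by (simp only: card_N_Int)
  also have "\<dots> = (\<Sum>y\<in>Y. \<Sum>u\<in>Nset Y. if E u y then 1 else 0)"
    by (rule sum.swap)
  also have "\<dots> = 3 * card Y" using edges_at by simp
  finally have "(\<Sum>u\<in>Nset Y. card (N u \<inter> Y)) = 3 * card Y" .
  moreover have "(\<Sum>u\<in>Nset Y. card (N u \<inter> Y) + deficit Y u) = 3 * card (Nset Y)"
    using Nset_subset by (simp add: deficit_def card_N finite_N subset_iff flip: card_Int_Diff)
  ultimately show ?thesis by (simp add: sum.distrib)
qed

lemma deficit_sum_ge:
  assumes "A \<subseteq> Nset Y" "\<And>u. u \<in> A \<Longrightarrow> c \<le> deficit Y u"
  shows "c * card A \<le> (\<Sum>u\<in>Nset Y. deficit Y u)"
proof -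
  have "c * card A \<le> (\<Sum>u\<in>A. deficit Y u)"
    using sum_bounded_below[of A c "deficit Y"] assms(2) by (simp add: mult.commute)
  also have "\<dots> \<le> (\<Sum>u\<in>Nset Y. deficit Y u)"
    using assms(1) finite_Nset by (intro sum_mono2) auto
  finally show ?thesis .
qed

lemma deficit_ge_1: "s \<in> N u \<Longrightarrow> s \<notin> Y \<Longrightarrow> 1 \<le> deficit Y u"
  using finite_N by (auto simp: deficit_def Suc_le_eq card_gt_0_iff)

lemma deficit_ge_2:
  assumes "s \<in> N u" "s' \<in> N u" "s \<noteq> s'" "s \<notin> Y" "s' \<notin> Y"
  shows "2 \<le> deficit Y u"
proof -
  have "card {s, s'} \<le> card (N u - Y)"
    using assms finite_N by (intro card_mono) auto
  then show ?thesis using assms(3) by (simp add: deficit_def)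
qed

text \<open>If all deficits vanished, \<open>Y \<union> Nset Y\<close> or \<open>Y \<inter> Nset Y\<close> would be a nonempty
  neighbour-closed set missing the edge \<open>pq\<close>.\<close>
lemma connected_imp_deficit_sum_pos:
  assumes "graph_connected V E" "Y \<subseteq> V" "Y \<noteq> {}" "E p q" "p \<notin> Y" "q \<notin> Y"
  shows "0 < (\<Sum>u\<in>Nset Y. deficit Y u)"
proof (rule ccontr)
  assume "\<not> ?thesis"
  then have "deficit Y u = 0" if "u \<in> Nset Y" for u
    using that finite_Nset by simp
  then have saturated: "N u \<subseteq> Y" if "u \<in> Nset Y" for u
    using that finite_N by (simp add: deficit_def)
  have "p \<in> V" using assms(4) adj_in_V by blast
  show False
  proof (cases "Y \<inter> Nset Y = {}")
    case False
    have "neighbour_closed V E (Y \<inter> Nset Y)"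
      using assms(2) saturated by (auto simp: neighbour_closed_def Nset_def)
    with False assms(1) have "Y \<inter> Nset Y = V" by (simp add: graph_connected_def)
    with \<open>p \<in> V\<close> assms(5) show False by blast
  next
    case True
    have "neighbour_closed V E (Y \<union> Nset Y)" unfolding neighbour_closed_def
    proof (intro conjI ballI)
      show "Y \<union> Nset Y \<subseteq> V" using assms(2) Nset_subset by blast
      show "N v \<subseteq> Y \<union> Nset Y" if "v \<in> Y \<union> Nset Y" for v
        using that saturated by (auto simp: Nset_def)
    qed
    with assms(1,3) have "Y \<union> Nset Y = V" by (simp add: graph_connected_def)
    with \<open>p \<in> V\<close> assms(5) have "N p \<subseteq> Y" using saturated by blast
    with assms(4,6) show False by (simp add: in_N_iff subset_iff)
  qed
qed

text \<open>Seymour's criterion applied to the neighbourhoods of the vertices outside \<open>W\<close>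
  together with the pairs \<open>P\<close>, which are meant to serve the vertices of \<open>W\<close>.\<close>
lemma colouring_from_surplus:
  assumes "finite P" "\<forall>p\<in>P. finite p"
    and surplus: "\<And>Y Q. Y \<subseteq> V - W \<Longrightarrow> Q \<subseteq> P \<Longrightarrow> Y \<noteq> {} \<or> Q \<noteq> {} \<Longrightarrow>
                   card Y + card Q < card (Nset Y \<union> \<Union>Q)"
  shows "\<exists>col :: 'a \<Rightarrow> bool. (\<forall>u\<in>V - W. \<exists>a\<in>N u. \<exists>b\<in>N u. col a \<noteq> col b) \<and>
           (\<forall>p q. {p, q} \<in> P \<longrightarrow> col p \<noteq> col q)"
proof -
  define F where "F = N ` (V - W) \<union> P"
  have "finite F" using finite_V assms(1) by (simp add: F_def)
  have "\<forall>f\<in>F. finite f" using finite_N assms(2) by (auto simp: F_def)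
  have "card G < card (\<Union>G)" if G: "G \<subseteq> F" "G \<noteq> {}" for G
  proof -
    define Y where "Y = {u\<in>V - W. N u \<in> G}"
    define Q where "Q = G \<inter> P"
    have "G \<subseteq> N ` Y \<union> Q" using G(1) by (auto simp: F_def Y_def Q_def)
    moreover have "finite Y" using finite_V by (simp add: Y_def)
    moreover have "finite Q" using assms(1) by (simp add: Q_def)
    ultimately have "card G \<le> card (N ` Y \<union> Q)" by (simp add: card_mono)
    also have "\<dots> \<le> card (N ` Y) + card Q" by (rule card_Un_le)
    also have "\<dots> \<le> card Y + card Q" using \<open>finite Y\<close> by (simp add: card_image_le)
    also have "\<dots> < card (Nset Y \<union> \<Union>Q)"
    proof (rule surplus)
      show "Y \<subseteq> V - W" "Q \<subseteq> P" by (auto simp: Y_def Q_def)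
      show "Y \<noteq> {} \<or> Q \<noteq> {}" using \<open>G \<subseteq> N ` Y \<union> Q\<close> G(2) by auto
    qed
    also have "\<dots> \<le> card (\<Union>G)"
    proof (rule card_mono)
      have "finite G" using G(1) \<open>finite F\<close> finite_subset by blast
      then show "finite (\<Union>G)" using G(1) \<open>\<forall>f\<in>F. finite f\<close> by blast
      show "Nset Y \<union> \<Union>Q \<subseteq> \<Union>G" by (auto simp: Nset_def Y_def Q_def)
    qed
    finally show ?thesis .
  qed
  then obtain col :: "'a \<Rightarrow> bool" where col: "\<forall>f\<in>F. \<exists>u\<in>f. \<exists>u'\<in>f. col u \<noteq> col u'"
    using two_colouring_if_surplus[OF \<open>finite F\<close> \<open>\<forall>f\<in>F. finite f\<close>] by blast
  moreover have "col p \<noteq> col q" if "{p, q} \<in> P" for p q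
  proof -
    have "{p, q} \<in> F" using that by (simp add: F_def)
    with col have "\<exists>u\<in>{p, q}. \<exists>u'\<in>{p, q}. col u \<noteq> col u'" by (rule bspec)
    then show ?thesis by auto
  qed
  moreover have "\<forall>u\<in>V - W. \<exists>a\<in>N u. \<exists>b\<in>N u. col a \<noteq> col b"
  proof
    fix u assume "u \<in> V - W"
    then have "N u \<in> F" by (simp add: F_def)
    with col show "\<exists>a\<in>N u. \<exists>b\<in>N u. col a \<noteq> col b" by (rule bspec)
  qed
  ultimately show ?thesis by (intro exI[of _ col] conjI allI impI)
qed

lemma four_cycle_surplus:
  assumes "graph_connected V E"
    and cycle: "E v a" "E a w" "E w b" "E b v" "v \<noteq> w" "a \<noteq> b"
    and Y: "Y \<subseteq> V - {v, a, w, b}" and Q: "Q \<subseteq> {{a, b}, {v, w}}"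
    and nonempty: "Y \<noteq> {} \<or> Q \<noteq> {}"
  shows "card Y + card Q < card (Nset Y \<union> \<Union>Q)"
proof -
  define S where "S = {v, a, w, b}"
  have "a \<in> N v" "b \<in> N v" "a \<in> N w" "b \<in> N w" "v \<in> N a" "w \<in> N a" "v \<in> N b" "w \<in> N b"
    using cycle adj_sym by (auto simp: in_N_iff)
  then have two_nbrs_in_S: "\<exists>s\<in>N u. \<exists>s'\<in>N u. s \<noteq> s' \<and> s \<in> S \<and> s' \<in> S" if "u \<in> S" for u
    using that cycle(5,6) by (auto simp: S_def)
  have "\<Union>Q \<subseteq> S" "finite (\<Union>Q)" using Q by (auto simp: S_def dest: finite_subset)
  have card_Union: "card (\<Union>Q) = 2 * card Q"
  proof -
    have "Q = {} \<or> Q = {{a, b}} \<or> Q = {{v, w}} \<or> Q = {{a, b}, {v, w}}" using Q by auto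
    moreover have "{a, b} \<inter> {v, w} = {}" using cycle adj_neq by blast
    then have "card {{a, b}, {v, w}} = 2" "card (\<Union>{{a, b}, {v, w}}) = 4"
      using cycle(5,6) by (auto simp: card_insert_if)
    ultimately show ?thesis using cycle(5,6) by auto
  qed
  define D where "D = (\<Sum>u\<in>Nset Y. deficit Y u)"
  have count: "3 * card (Nset Y) = 3 * card Y + D"
    unfolding D_def using Y by (intro card_Nset_double_count) auto
  have "2 * card (Nset Y \<inter> \<Union>Q) \<le> D"
    unfolding D_def
  proof (rule deficit_sum_ge)
    fix u assume "u \<in> Nset Y \<inter> \<Union>Q"
    then obtain s s' where "s \<in> N u" "s' \<in> N u" "s \<noteq> s'" "s \<in> S" "s' \<in> S"
      using two_nbrs_in_S \<open>\<Union>Q \<subseteq> S\<close> by blast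
    then show "2 \<le> deficit Y u" using Y by (intro deficit_ge_2) (auto simp: S_def)
  qed auto
  moreover have "card (Nset Y \<inter> \<Union>Q) \<le> card (\<Union>Q)"
    using \<open>finite (\<Union>Q)\<close> by (intro card_mono) auto
  moreover have "card (Nset Y) + card (\<Union>Q) = card (Nset Y \<union> \<Union>Q) + card (Nset Y \<inter> \<Union>Q)"
    using finite_Nset \<open>finite (\<Union>Q)\<close> by (rule card_Un_Int)
  moreover have "Y \<noteq> {} \<Longrightarrow> 0 < D"
    unfolding D_def using Y cycle(1) by (intro connected_imp_deficit_sum_pos) (auto simp: assms(1))
  moreover have "Y = {} \<Longrightarrow> 0 < card Q"
    using nonempty Q by (auto simp: card_gt_0_iff dest: finite_subset)
  ultimately show ?thesis using count card_Union by (cases "Y = {}") simp_all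
qed

text \<open>Colour \<open>a, b\<close> differently (serving \<open>v, w\<close>) and \<open>v, w\<close> differently (serving \<open>a, b\<close>).\<close>
lemma coupon_colouring_if_four_cycle:
  assumes "graph_connected V E"
    and cycle: "E v a" "E a w" "E w b" "E b v" "v \<noteq> w" "a \<noteq> b"
  shows "\<exists>col. coupon_colouring V E col"
proof -
  define S where "S = {v, a, w, b}"
  define P where "P = {{a, b}, {v, w}}"
  have "finite P" "\<forall>p\<in>P. finite p" by (simp_all add: P_def)
  moreover have "card Y + card Q < card (Nset Y \<union> \<Union>Q)"
    if "Y \<subseteq> V - S" "Q \<subseteq> P" "Y \<noteq> {} \<or> Q \<noteq> {}" for Y Q
    using four_cycle_surplus[OF assms] that by (simp add: S_def P_def)
  ultimately obtain col :: "'a \<Rightarrow> bool"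
    where outside: "\<forall>u\<in>V - S. \<exists>a\<in>N u. \<exists>b\<in>N u. col a \<noteq> col b"
      and pairs: "\<forall>p q. {p, q} \<in> P \<longrightarrow> col p \<noteq> col q"
    using colouring_from_surplus[of P S] by blast
  have "col a \<noteq> col b" "col v \<noteq> col w" using pairs by (simp_all add: P_def)
  have nbrs: "a \<in> N v" "b \<in> N v" "a \<in> N w" "b \<in> N w" "v \<in> N a" "w \<in> N a" "v \<in> N b" "w \<in> N b"
    using cycle adj_sym by (auto simp: in_N_iff)
  have "coupon_colouring V E col" unfolding coupon_colouring_def
  proof
    fix u assume "u \<in> V"
    show "\<exists>x\<in>N u. \<exists>y\<in>N u. col x \<noteq> col y"
    proof (cases "u \<in> S")
      case False
      with outside \<open>u \<in> V\<close> show ?thesis by blast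
    next
      case True
      then have "u = v \<or> u = a \<or> u = w \<or> u = b" by (simp add: S_def)
      with nbrs \<open>col a \<noteq> col b\<close> \<open>col v \<noteq> col w\<close> show ?thesis by blast
    qed
  qed
  then show ?thesis by blast
qed

end

section \<open>Cubic graphs whose vertices all lie on triangles\<close>

text \<open>Without 4-cycles, every vertex lies on exactly one triangle and has exactly one
  neighbour, \<open>outer u\<close>, off that triangle.\<close>
locale triangular_cubic_graph = cubic_graph +
  assumes no_four_cycle:
      "\<And>p q r s. E p q \<Longrightarrow> E q r \<Longrightarrow> E r s \<Longrightarrow> E s p \<Longrightarrow> p \<noteq> r \<Longrightarrow> q \<noteq> s \<Longrightarrow> False"
    and on_triangle: "\<And>v. v \<in> V \<Longrightarrow> \<exists>a b. E v a \<and> E v b \<and> E a b"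
begin

definition triangle :: "'a \<Rightarrow> 'a set" where
  "triangle u = insert u {w \<in> N u. \<exists>t\<in>N u. E w t}"

definition outer :: "'a \<Rightarrow> 'a" where
  "outer u = (THE e. e \<in> N u \<and> e \<notin> triangle u)"

lemma triangle_structure:
  assumes "u \<in> V"
  obtains a b where "E u a" "E u b" "E a b" "a \<noteq> b" "triangle u = {u, a, b}"
    "N u = {a, b, outer u}" "outer u \<noteq> a" "outer u \<noteq> b" "E u (outer u)"
proof -
  obtain a b where ab: "E u a" "E u b" "E a b" using on_triangle[OF assms] by blast
  have "a \<noteq> b" using ab adj_neq by blast
  have "a \<in> N u" "b \<in> N u" using ab by (auto simp: in_N_iff)
  with card_N[OF assms] \<open>a \<noteq> b\<close> obtain e where e: "N u = {a, b, e}" "e \<noteq> a" "e \<noteq> b"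
    using card_3_obtain_third by metis
  have "E u e" using e by (auto simp: in_N_iff[symmetric])
  have "\<not> E e a" "\<not> E e b"
    using no_four_cycle[of b a e u] no_four_cycle[of a b e u] ab \<open>E u e\<close> e adj_sym adj_neq by blast+
  then have triangle: "triangle u = {u, a, b}"
    using e ab adj_sym adj_neq by (auto simp: triangle_def)
  have "outer u = e"
    unfolding outer_def using e triangle adj_neq[OF \<open>E u e\<close>] by (intro the_equality) auto
  with ab \<open>a \<noteq> b\<close> triangle e \<open>E u e\<close> that show ?thesis by blast
qed

lemma in_triangle: "u \<in> triangle u"
  by (simp add: triangle_def)

lemma card_triangle: "u \<in> V \<Longrightarrow> card (triangle u) = 3"
  by (metis adj_neq card_3_iff triangle_structure)

lemma triangle_adj: "u \<in> V \<Longrightarrow> p \<in> triangle u \<Longrightarrow> q \<in> triangle u \<Longrightarrow> p \<noteq> q \<Longrightarrow> E p q"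
  by (metis adj_sym empty_iff insert_iff triangle_structure)

lemma triangle_eq:
  assumes "u \<in> V" "p \<in> triangle u"
  shows "triangle p = triangle u"
proof -
  have other: "triangle a = {u, a, b}" if "E u a" "E u b" "E a b" "a \<noteq> b" for a b
  proof -
    have "a \<in> V" using that adj_in_V by blast
    then obtain a1 a2 where "a1 \<noteq> a2" "triangle a = {a, a1, a2}"
      by (rule triangle_structure)
    moreover have "u \<in> N a" "b \<in> N a" "E u b" "E b u"
      using that adj_sym by (auto simp: in_N_iff)
    then have "u \<in> triangle a" "b \<in> triangle a" by (auto simp: triangle_def)
    moreover have "u \<noteq> a" "b \<noteq> a" "u \<noteq> b" using that adj_neq by auto
    ultimately show ?thesis by auto
  qed
  obtain a b where ab: "E u a" "E u b" "E a b" "a \<noteq> b" "triangle u = {u, a, b}"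
    using assms(1) by (rule triangle_structure)
  then have "p = u \<or> p = a \<or> p = b" using assms(2) by auto
  then show ?thesis
    using other[OF ab(1-4)] other[OF ab(2,1) adj_sym[OF ab(3)]] ab(4,5) by auto
qed

lemma triangles_meet_eq:
  "u \<in> V \<Longrightarrow> v \<in> V \<Longrightarrow> p \<in> triangle u \<Longrightarrow> p \<in> triangle v \<Longrightarrow> triangle u = triangle v"
  using triangle_eq by metis

lemma adj_outer: "u \<in> V \<Longrightarrow> E u (outer u)"
  by (metis triangle_structure)

lemma outer_in_V: "u \<in> V \<Longrightarrow> outer u \<in> V"
  using adj_outer adj_in_V by blast

lemma outer_notin_triangle: "u \<in> V \<Longrightarrow> outer u \<notin> triangle u"
  by (metis adj_neq insertE singletonD triangle_structure)

lemma N_eq: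
  assumes "u \<in> V"
  shows "N u = (triangle u - {u}) \<union> {outer u}"
proof -
  from assms obtain a b where "E u a" "E u b" "triangle u = {u, a, b}" "N u = {a, b, outer u}"
    by (rule triangle_structure)
  then show ?thesis using adj_neq by auto
qed

lemma outer_outer:
  assumes "u \<in> V"
  shows "outer (outer u) = u"
proof -
  define e where "e = outer u"
  have "e \<in> V" "u \<in> N e" using assms adj_outer outer_in_V adj_sym by (auto simp: e_def in_N_iff)
  moreover have "u \<notin> triangle e"
    using triangle_eq[OF \<open>e \<in> V\<close>] outer_notin_triangle[OF assms] in_triangle by (metis e_def)
  ultimately show ?thesis using N_eq by (auto simp: e_def)
qed

lemma triangle_other:
  assumes "q \<in> V"
  obtains t where "t \<in> triangle q" "t \<noteq> q" "t \<noteq> p"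
proof -
  obtain a b where ab: "E q a" "E q b" "a \<noteq> b" "triangle q = {q, a, b}"
    using assms by (rule triangle_structure)
  show ?thesis
  proof (cases "p = a")
    case True
    with ab adj_neq show ?thesis by (intro that[of b]) auto
  next
    case False
    with ab adj_neq show ?thesis by (intro that[of a]) auto
  qed
qed

definition mate :: "'a \<Rightarrow> 'a" where
  "mate q = (SOME t. t \<in> triangle q \<and> t \<noteq> q)"

lemma mate_in_triangle: "q \<in> V \<Longrightarrow> mate q \<in> triangle q \<and> mate q \<noteq> q"
  unfolding mate_def by (rule someI_ex) (meson triangle_other)

text \<open>The vertex of \<open>Nset Y\<close> on whose deficit the vertex \<open>r\<close> draws: it lies on the triangle
  of the \<open>Y\<close>-neighbour \<open>outer r\<close> of \<open>r\<close>.\<close>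
definition partner :: "'a set \<Rightarrow> 'a \<Rightarrow> 'a" where
  "partner Y r = (if outer r \<in> Nset Y then outer r else mate (outer r))"

lemma partner_in_triangle: "r \<in> V \<Longrightarrow> partner Y r \<in> triangle (outer r)"
  using mate_in_triangle outer_in_V in_triangle by (simp add: partner_def)

lemma partner_in_Nset_deficit:
  assumes "r \<in> V" "r \<notin> Y" "outer r \<in> Y"
  shows "partner Y r \<in> Nset Y" "1 \<le> deficit Y (partner Y r)"
proof -
  define e where "e = outer r"
  have "e \<in> V" using assms(1) outer_in_V by (simp add: e_def)
  have "partner Y r \<in> Nset Y \<and> 1 \<le> deficit Y (partner Y r)"
  proof (cases "e \<in> Nset Y")
    case True
    have "r \<in> N e" using adj_outer[OF assms(1)] adj_sym by (simp add: e_def in_N_iff)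
    with True assms(2) show ?thesis
      using deficit_ge_1[of r e Y] by (simp add: partner_def e_def[symmetric])
  next
    case False
    define m where "m = mate e"
    have m: "m \<in> triangle e" "m \<noteq> e" using mate_in_triangle[OF \<open>e \<in> V\<close>] by (simp_all add: m_def)
    have "m \<in> Nset Y"
      using triangle_adj[OF \<open>e \<in> V\<close> in_triangle m(1)] m(2) assms(3) by (auto simp: in_Nset_iff e_def)
    moreover obtain t where t: "t \<in> triangle e" "t \<noteq> e" "t \<noteq> m"
      using \<open>e \<in> V\<close> by (rule triangle_other)
    have "t \<in> N m" using triangle_adj[OF \<open>e \<in> V\<close> m(1) t(1)] t(3) by (simp add: in_N_iff)
    moreover have "t \<notin> Y"
      using triangle_adj[OF \<open>e \<in> V\<close> t(1) in_triangle t(2)] False by (auto simp: in_Nset_iff)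
    ultimately show ?thesis
      using False deficit_ge_1[of t m Y] by (simp add: partner_def e_def[symmetric] m_def[symmetric])
  qed
  then show "partner Y r \<in> Nset Y" "1 \<le> deficit Y (partner Y r)" by simp_all
qed

lemma inj_on_partner: "inj_on (partner Y) {r \<in> V. outer r \<in> Y}"
proof (rule inj_onI, rule ccontr)
  fix r1 r2
  assume r: "r1 \<in> {r \<in> V. outer r \<in> Y}" "r2 \<in> {r \<in> V. outer r \<in> Y}"
    and eq: "partner Y r1 = partner Y r2" and "r1 \<noteq> r2"
  then have "outer r1 \<noteq> outer r2" by (metis mem_Collect_eq outer_outer)
  have V: "outer r1 \<in> V" "outer r2 \<in> V" using r outer_in_V by auto
  have "partner Y r1 \<in> triangle (outer r1)" "partner Y r2 \<in> triangle (outer r2)"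
    using partner_in_triangle r by auto
  then have "triangle (outer r1) = triangle (outer r2)" using triangles_meet_eq[OF V] eq by metis
  then have "E (outer r1) (outer r2)"
    using triangle_adj[OF V(1) in_triangle] in_triangle \<open>outer r1 \<noteq> outer r2\<close> by metis
  then have "outer r1 \<in> Nset Y" "outer r2 \<in> Nset Y"
    using r adj_sym by (auto simp: in_Nset_iff)
  with eq \<open>outer r1 \<noteq> outer r2\<close> show False by (simp add: partner_def)
qed

text \<open>Each \<open>r \<in> K\<close> misses its two triangle neighbours, and \<open>partner Y\<close> maps \<open>K\<close>
  injectively to further vertices of positive deficit.\<close>
lemma deficit_sum_ge_three_card:
  assumes "K \<subseteq> Nset Y" and off_Y: "\<And>r. r \<in> K \<Longrightarrow> triangle r \<inter> Y = {}"
  shows "3 * card K \<le> (\<Sum>u\<in>Nset Y. deficit Y u)"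
proof -
  have in_V: "r \<in> V" if "r \<in> K" for r using that assms(1) Nset_subset by blast
  have outer_in_Y: "outer r \<in> Y" if r: "r \<in> K" for r
  proof -
    have "r \<in> Nset Y" using r assms(1) by blast
    then obtain y where "y \<in> Y" "E y r" by (auto simp: in_Nset_iff)
    moreover have "y \<in> N r" using \<open>E y r\<close> adj_sym by (simp add: in_N_iff)
    ultimately show ?thesis using N_eq[OF in_V[OF r]] off_Y[OF r] by auto
  qed
  have two: "2 \<le> deficit Y r" if r: "r \<in> K" for r
  proof -
    obtain a b where "E r a" "E r b" "a \<noteq> b" "triangle r = {r, a, b}"
      using in_V[OF r] by (rule triangle_structure)
    with off_Y[OF r] show ?thesis by (intro deficit_ge_2[of a r b]) (auto simp: in_N_iff)
  qed
  have K_sub: "K \<subseteq> {r \<in> V. outer r \<in> Y}" using in_V outer_in_Y by blast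
  have not_in_Y: "r \<notin> Y" if "r \<in> K" for r using off_Y[OF that] in_triangle by blast
  have partners: "partner Y r \<in> Nset Y \<and> 1 \<le> deficit Y (partner Y r)" if "r \<in> K" for r
    using partner_in_Nset_deficit[OF in_V[OF that] not_in_Y[OF that] outer_in_Y[OF that]] by simp
  have disjoint: "K \<inter> partner Y ` K = {}"
  proof (rule ccontr)
    assume "K \<inter> partner Y ` K \<noteq> {}"
    then obtain r where "r \<in> K" "partner Y r \<in> K" by blast
    then have "triangle (partner Y r) = triangle (outer r)"
      using triangle_eq[OF outer_in_V partner_in_triangle] in_V[OF \<open>r \<in> K\<close>] by blast
    then show False
      using off_Y[OF \<open>partner Y r \<in> K\<close>] outer_in_Y[OF \<open>r \<in> K\<close>] in_triangle by blast
  qed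
  have "finite K" using assms(1) finite_Nset finite_subset by blast
  have card_partners: "card (partner Y ` K) = card K"
    using inj_on_subset[OF inj_on_partner K_sub] by (rule card_image)
  have "card K * 2 \<le> (\<Sum>u\<in>K. deficit Y u)"
    using sum_bounded_below[of K 2 "deficit Y"] two by simp
  moreover have "card (partner Y ` K) * 1 \<le> (\<Sum>u\<in>partner Y ` K. deficit Y u)"
    using sum_bounded_below[of "partner Y ` K" 1 "deficit Y"] partners by force
  ultimately have "3 * card K \<le> (\<Sum>u\<in>K. deficit Y u) + (\<Sum>u\<in>partner Y ` K. deficit Y u)"
    using card_partners by linarith
  also have "\<dots> = (\<Sum>u\<in>K \<union> partner Y ` K. deficit Y u)"
    using disjoint \<open>finite K\<close> by (simp add: sum.union_disjoint)
  also have "\<dots> \<le> (\<Sum>u\<in>Nset Y. deficit Y u)"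
    using assms(1) partners finite_Nset by (intro sum_mono2) auto
  finally show ?thesis .
qed

lemma triangles_disjoint_outer:
  assumes "z \<in> V"
  shows "triangle z \<inter> triangle (outer z) = {}"
  using triangles_meet_eq[OF assms outer_in_V[OF assms]] outer_notin_triangle[OF assms] in_triangle
  by blast

lemma distinct_two_triangles:
  assumes "z \<in> V" "triangle z = {z, x, y}" "triangle (outer z) = {outer z, x', y'}"
  shows "distinct [z, x, y, outer z, x', y']"
proof -
  have "card {z, x, y} = 3" "card {outer z, x', y'} = 3"
    using card_triangle[OF assms(1)] card_triangle[OF outer_in_V[OF assms(1)]] assms(2,3)
    by simp_all
  moreover have "{z, x, y} \<inter> {outer z, x', y'} = {}"
    using triangles_disjoint_outer[OF assms(1)] assms(2,3) by simp
  ultimately show ?thesis by (auto simp: card_insert_if split: if_splits)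
qed

text \<open>The pairs \<open>P\<close> form a tree on the six vertices of the two triangles, so a nonempty
  \<open>Q \<subseteq> P\<close> covers more than \<open>card Q\<close> vertices; each vertex of \<open>Nset Y\<close> on the triangles
  is paid for by a deficit of three.\<close>
lemma triangle_pair_surplus:
  assumes "graph_connected V E" "z \<in> V"
    and tz: "triangle z = {z, x, y}" and tz': "triangle (outer z) = {outer z, x', y'}"
    and Y: "Y \<subseteq> V - (triangle z \<union> triangle (outer z))"
    and Q: "Q \<subseteq> {{y, z}, {x, z}, {y', outer z}, {x', outer z}, {x, outer z}}"
    and nonempty: "Y \<noteq> {} \<or> Q \<noteq> {}"
  shows "card Y + card Q < card (Nset Y \<union> \<Union>Q)"
proof -
  define z' where "z' = outer z"
  define W where "W = triangle z \<union> triangle z'"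
  have "z' \<in> V" using outer_in_V[OF assms(2)] by (simp add: z'_def)
  have distinct: "distinct [z, x, y, z', x', y']"
    using distinct_two_triangles[OF assms(2) tz tz'] by (simp add: z'_def)
  have "Y \<subseteq> V" "Y \<inter> W = {}" using Y by (auto simp: W_def z'_def)
  have "\<Union>Q \<subseteq> W" "finite (\<Union>Q)"
    using Q tz tz' by (auto simp: W_def z'_def dest: finite_subset)
  define D where "D = (\<Sum>u\<in>Nset Y. deficit Y u)"
  have count: "3 * card (Nset Y) = 3 * card Y + D"
    unfolding D_def using \<open>Y \<subseteq> V\<close> by (rule card_Nset_double_count)
  have "3 * card (Nset Y \<inter> W) \<le> D"
    unfolding D_def
  proof (rule deficit_sum_ge_three_card)
    fix r assume "r \<in> Nset Y \<inter> W"
    then have "r \<in> triangle z \<or> r \<in> triangle z'" by (simp add: W_def)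
    then have "triangle r \<subseteq> W"
    proof
      assume "r \<in> triangle z"
      then show ?thesis using triangle_eq[OF assms(2)] by (simp add: W_def)
    next
      assume "r \<in> triangle z'"
      then show ?thesis using triangle_eq[OF \<open>z' \<in> V\<close>] by (simp add: W_def)
    qed
    then show "triangle r \<inter> Y = {}" using \<open>Y \<inter> W = {}\<close> by blast
  qed simp
  moreover have "card (Nset Y \<inter> \<Union>Q) \<le> card (Nset Y \<inter> W)"
    using \<open>\<Union>Q \<subseteq> W\<close> finite_Nset by (intro card_mono) auto
  moreover have "card (Nset Y) + card (\<Union>Q) = card (Nset Y \<union> \<Union>Q) + card (Nset Y \<inter> \<Union>Q)"
    using finite_Nset \<open>finite (\<Union>Q)\<close> by (rule card_Un_Int)
  moreover have "Y \<noteq> {} \<Longrightarrow> 0 < D"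
    unfolding D_def using assms(1) \<open>Y \<subseteq> V\<close> adj_outer[OF assms(2)] \<open>Y \<inter> W = {}\<close> in_triangle
    by (intro connected_imp_deficit_sum_pos) (auto simp: W_def z'_def)
  moreover have "Q \<noteq> {} \<Longrightarrow> card Q < card (\<Union>Q)"
  proof (rule card_less_card_Union_if_fresh_elements)
    show "has_fresh_elements [{y', z'}, {x', z'}, {x, z'}, {x, z}, {y, z}]"
      using distinct by auto
    show "\<forall>p\<in>set [{y', z'}, {x', z'}, {x, z'}, {x, z}, {y, z}]. finite p \<and> 2 \<le> card p"
      using distinct by auto
    show "Q \<subseteq> set [{y', z'}, {x', z'}, {x, z'}, {x, z}, {y, z}]"
      using Q by (auto simp: z'_def)
  qed
  ultimately show ?thesis using count nonempty
    by (cases "Y = {}"; cases "Q = {}") auto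
qed

text \<open>Two triangles \<open>zxy\<close> and \<open>z'x'y'\<close> joined by the edge \<open>zz'\<close>: every vertex of them
  sees one of the pairs \<open>yz, xz, y'z', x'z', xz'\<close>, except \<open>z'\<close>, which sees \<open>x'\<close> and \<open>z\<close>,
  coloured differently because \<open>x'\<close> and \<open>x\<close> both differ from \<open>z'\<close>.\<close>
lemma coupon_colouring_if_triangular:
  assumes "graph_connected V E" "V \<noteq> {}"
  shows "\<exists>col. coupon_colouring V E col"
proof -
  obtain z where "z \<in> V" using assms(2) by blast
  define z' where "z' = outer z"
  have "z' \<in> V" "E z z'" using outer_in_V adj_outer \<open>z \<in> V\<close> by (simp_all add: z'_def)
  obtain x y where zxy: "E z x" "E z y" "E x y" "triangle z = {z, x, y}"
    using \<open>z \<in> V\<close> by (rule triangle_structure)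
  obtain x' y' where zxy': "E z' x'" "E z' y'" "E x' y'" "triangle z' = {z', x', y'}"
    using \<open>z' \<in> V\<close> by (rule triangle_structure)
  define W where "W = triangle z \<union> triangle z'"
  define P where "P = {{y, z}, {x, z}, {y', z'}, {x', z'}, {x, z'}}"
  have "finite P" "\<forall>p\<in>P. finite p" by (simp_all add: P_def)
  moreover have "card Y + card Q < card (Nset Y \<union> \<Union>Q)"
    if "Y \<subseteq> V - W" "Q \<subseteq> P" "Y \<noteq> {} \<or> Q \<noteq> {}" for Y Q
    using triangle_pair_surplus[OF assms(1) \<open>z \<in> V\<close> zxy(4)] zxy'(4) that
    by (simp add: W_def P_def z'_def)
  ultimately obtain col :: "'a \<Rightarrow> bool"
    where outside: "\<forall>u\<in>V - W. \<exists>a\<in>N u. \<exists>b\<in>N u. col a \<noteq> col b"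
      and pairs: "\<forall>p q. {p, q} \<in> P \<longrightarrow> col p \<noteq> col q"
    using colouring_from_surplus[of P W] by blast
  have colours: "col y \<noteq> col z" "col x \<noteq> col z" "col y' \<noteq> col z'" "col x' \<noteq> col z'" "col x \<noteq> col z'"
    using pairs unfolding P_def by blast+
  have nbrs: "x \<in> N z" "z' \<in> N z" "y \<in> N x" "z \<in> N x" "x \<in> N y" "z \<in> N y"
    "x' \<in> N z'" "z \<in> N z'" "y' \<in> N x'" "z' \<in> N x'" "x' \<in> N y'" "z' \<in> N y'"
    using zxy zxy' \<open>E z z'\<close> adj_sym by (auto simp: in_N_iff)
  have W_served: "\<exists>a\<in>N u. \<exists>b\<in>N u. col a \<noteq> col b" if "u \<in> W" for u
  proof -
    have "u = z \<or> u = x \<or> u = y \<or> u = z' \<or> u = x' \<or> u = y'"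
      using that zxy(4) zxy'(4) by (auto simp: W_def)
    then show ?thesis using nbrs colours by (elim disjE) blast+
  qed
  have "coupon_colouring V E col"
    unfolding coupon_colouring_def using outside W_served by blast
  then show ?thesis by blast
qed

end

section \<open>Reduction to connected graphs and the theorem\<close>

context cubic_graph
begin

lemma coupon_colouring_if_connected:
  assumes "graph_connected V E" "every_vertex_on_short_cycle V E"
  shows "\<exists>col. coupon_colouring V E col"
proof (cases "\<exists>v a w b. E v a \<and> E a w \<and> E w b \<and> E b v \<and> v \<noteq> w \<and> a \<noteq> b")
  case True
  then show ?thesis using coupon_colouring_if_four_cycle[OF assms(1)] by blast
next
  case False
  have "triangular_cubic_graph V E"
  proof unfold_locales
    show "False" if "E p q" "E q r" "E r s" "E s p" "p \<noteq> r" "q \<noteq> s" for p q r s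
      using False that by blast
    show "\<exists>a b. E v a \<and> E v b \<and> E a b" if "v \<in> V" for v
    proof -
      from assms(2) \<open>v \<in> V\<close> obtain a b where ab: "a \<in> N v" "b \<in> N v" "a \<noteq> b"
        "E a b \<or> (\<exists>w. w \<noteq> v \<and> E a w \<and> E b w)"
        unfolding every_vertex_on_short_cycle_def by blast
      then have "E v a" "E v b" by (simp_all add: in_N_iff)
      have "E a b"
      proof (rule ccontr)
        assume "\<not> E a b"
        then obtain w where "w \<noteq> v" "E a w" "E w b" using ab(4) adj_sym by blast
        with \<open>E v a\<close> adj_sym[OF \<open>E v b\<close>] ab(3) False show False by blast
      qed
      with \<open>E v a\<close> \<open>E v b\<close> show ?thesis by blast
    qed
  qed
  then interpret triangular_cubic_graph V E .
  show ?thesis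
  proof (cases "V = {}")
    case True
    then show ?thesis by (simp add: coupon_colouring_def)
  next
    case False
    then show ?thesis using coupon_colouring_if_triangular[OF assms(1)] by blast
  qed
qed

lemma neighbour_closed_complement:
  assumes "neighbour_closed V E S"
  shows "neighbour_closed V E (V - S)"
  unfolding neighbour_closed_def
proof (intro conjI ballI subsetI)
  fix v u assume "v \<in> V - S" "u \<in> N v"
  then have "v \<in> N u" using adj_sym by (simp add: in_N_iff)
  with \<open>v \<in> V - S\<close> assms have "u \<notin> S" by (auto simp: neighbour_closed_def)
  with \<open>u \<in> N v\<close> N_subset show "u \<in> V - S" by blast
qed blast

context
  fixes S assumes closed: "neighbour_closed V E S"
begin

definition E_on :: "'a \<Rightarrow> 'a \<Rightarrow> bool" where
  "E_on u w \<longleftrightarrow> E u w \<and> u \<in> S \<and> w \<in> S"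

lemma neighbours_E_on: "v \<in> S \<Longrightarrow> neighbours S E_on v = N v"
  using closed by (auto simp: neighbours_def neighbour_closed_def E_on_def)

lemma cubic_graph_E_on: "cubic_graph S E_on"
proof
  show "simple_graph S E_on"
    using closed finite_V finite_subset adj_sym
    by (auto simp: simple_graph_def neighbour_closed_def E_on_def)
  show "cubic S E_on"
    using closed neighbours_E_on card_N by (auto simp: cubic_def neighbour_closed_def)
qed

lemma every_vertex_on_short_cycle_E_on:
  assumes "every_vertex_on_short_cycle V E"
  shows "every_vertex_on_short_cycle S E_on"
  unfolding every_vertex_on_short_cycle_def
proof
  fix v assume "v \<in> S"
  then have "v \<in> V" using closed by (auto simp: neighbour_closed_def)
  with assms obtain a b where ab: "a \<in> N v" "b \<in> N v" "a \<noteq> b"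
    "E a b \<or> (\<exists>w. w \<noteq> v \<and> E a w \<and> E b w)"
    unfolding every_vertex_on_short_cycle_def by blast
  have "a \<in> S" "b \<in> S" using ab \<open>v \<in> S\<close> closed by (auto simp: neighbour_closed_def)
  have "E_on a b \<or> (\<exists>w. w \<noteq> v \<and> E_on a w \<and> E_on b w)"
  proof (cases "E a b")
    case True
    with \<open>a \<in> S\<close> \<open>b \<in> S\<close> show ?thesis by (simp add: E_on_def)
  next
    case False
    then obtain w where w: "w \<noteq> v" "E a w" "E b w" using ab by blast
    then have "w \<in> N a" by (simp add: in_N_iff)
    then have "w \<in> S" using \<open>a \<in> S\<close> closed by (auto simp: neighbour_closed_def)
    with w \<open>a \<in> S\<close> \<open>b \<in> S\<close> show ?thesis by (auto simp: E_on_def)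
  qed
  with ab \<open>v \<in> S\<close> show "\<exists>a b. a \<in> neighbours S E_on v \<and> b \<in> neighbours S E_on v \<and> a \<noteq> b \<and>
      (E_on a b \<or> (\<exists>w. w \<noteq> v \<and> E_on a w \<and> E_on b w))"
    by (auto simp: neighbours_E_on)
qed

end

lemma coupon_colouring_join:
  assumes "neighbour_closed V E S"
    and "coupon_colouring S (E_on S) c1" "coupon_colouring (V - S) (E_on (V - S)) c2"
  shows "coupon_colouring V E (\<lambda>u. if u \<in> S then c1 u else c2 u)"
  unfolding coupon_colouring_def
proof
  fix v assume "v \<in> V"
  have side: "\<exists>a\<in>N v. \<exists>b\<in>N v. c a \<noteq> c b \<and> a \<in> S' \<and> b \<in> S'"
    if S': "neighbour_closed V E S'" "coupon_colouring S' (E_on S') c" "v \<in> S'" for S' c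
  proof -
    have "\<exists>a\<in>neighbours S' (E_on S') v. \<exists>b\<in>neighbours S' (E_on S') v. c a \<noteq> c b"
      using S'(2,3) unfolding coupon_colouring_def by blast
    then obtain a b where "a \<in> N v" "b \<in> N v" "c a \<noteq> c b"
      unfolding neighbours_E_on[OF S'(1,3)] by blast
    moreover have "N v \<subseteq> S'" using S' by (simp add: neighbour_closed_def)
    ultimately show ?thesis by blast
  qed
  show "\<exists>a\<in>N v. \<exists>b\<in>N v. (if a \<in> S then c1 a else c2 a) \<noteq> (if b \<in> S then c1 b else c2 b)"
  proof (cases "v \<in> S")
    case True
    then obtain a b where "a \<in> N v" "b \<in> N v" "c1 a \<noteq> c1 b" "a \<in> S" "b \<in> S"
      using side[OF assms(1,2)] by blast
    then show ?thesis by (intro bexI[of _ a] bexI[of _ b]) auto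
  next
    case False
    with \<open>v \<in> V\<close> obtain a b where "a \<in> N v" "b \<in> N v" "c2 a \<noteq> c2 b" "a \<in> V - S" "b \<in> V - S"
      using side[OF neighbour_closed_complement[OF assms(1)] assms(3)] by blast
    then show ?thesis by (intro bexI[of _ a] bexI[of _ b]) auto
  qed
qed

end

lemma coupon_colouring_exists:
  assumes "cubic_graph V E" "every_vertex_on_short_cycle V E"
  shows "\<exists>col. coupon_colouring V E col"
  using assms
proof (induction "card V" arbitrary: V E rule: less_induct)
  case less
  interpret cubic_graph V E by fact
  show ?case
  proof (cases "graph_connected V E")
    case True
    then show ?thesis using coupon_colouring_if_connected less.prems(2) by blast
  next
    case False
    then obtain S where S: "neighbour_closed V E S" "S \<noteq> {}" "S \<noteq> V"
      by (auto simp: graph_connected_def)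
    have smaller: "card S' < card V" if "neighbour_closed V E S'" "S' \<noteq> V" for S'
      using that finite_V by (intro psubset_card_mono) (auto simp: neighbour_closed_def)
    have colourable: "\<exists>c. coupon_colouring S' (E_on S') c" if "neighbour_closed V E S'" "S' \<noteq> V" for S'
      using less.hyps[OF smaller[OF that] cubic_graph_E_on[OF that(1)]]
        every_vertex_on_short_cycle_E_on[OF that(1) less.prems(2)] by blast
    have "V - S \<noteq> V" using S(1,2) by (auto simp: neighbour_closed_def)
    obtain c1 where "coupon_colouring S (E_on S) c1" using colourable[OF S(1,3)] by blast
    moreover obtain c2 where "coupon_colouring (V - S) (E_on (V - S)) c2"
      using colourable[OF neighbour_closed_complement[OF S(1)] \<open>V - S \<noteq> V\<close>] by blast
    ultimately have "coupon_colouring V E (\<lambda>u. if u \<in> S then c1 u else c2 u)"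
      by (rule coupon_colouring_join[OF S(1)])
    then show ?thesis by blast
  qed
qed

lemma L_edge_cases:
  assumes "L_edge i j"
  shows "(i, j) \<in> {(0,1), (1,0), (0,2), (2,0), (0,3), (3,0), (1,4), (4,1), (1,5), (5,1),
                    (2,6), (6,2), (2,7), (7,2), (3,8), (8,3), (3,9), (9,3)}"
  using assms unfolding L_edge_def by (auto simp: doubleton_eq_iff)

context cubic_graph
begin

lemma has_L_subgraph_if_tree:
  assumes "distinct [v, a, b, c, a1, a2, b1, b2, c1, c2]"
    and "E v a" "E v b" "E v c" "E a a1" "E a a2" "E b b1" "E b b2" "E c c1" "E c c2"
  shows "has_L_subgraph V E"
  unfolding has_L_subgraph_def
proof (intro exI conjI)
  define xs where "xs = [v, a, b, c, a1, a2, b1, b2, c1, c2]"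
  show "inj_on (nth xs) L_verts"
    using assms(1) by (intro inj_on_nth) (auto simp: xs_def L_verts_def)
  have "set xs \<subseteq> V" using assms(2-) adj_in_V by (auto simp: xs_def)
  moreover have "length xs = 10" by (simp add: xs_def)
  then have "nth xs ` L_verts \<subseteq> set xs" by (auto simp: L_verts_def intro!: nth_mem)
  ultimately show "nth xs ` L_verts \<subseteq> V" by blast
  show "\<forall>i\<in>L_verts. \<forall>j\<in>L_verts. L_edge i j \<longrightarrow> E (xs ! i) (xs ! j)"
  proof (intro ballI impI)
    fix i j assume "L_edge i j"
    from L_edge_cases[OF this] show "E (xs ! i) (xs ! j)"
      using assms(2-) adj_sym by (auto simp: xs_def numeral_eq_Suc)
  qed
qed

text \<open>If two neighbours of \<open>v\<close> were never adjacent nor had a second common neighbour,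
  \<open>v\<close>, its three neighbours and their six further neighbours would be ten distinct vertices
  spanning a copy of \<open>L\<close>.\<close>
lemma every_vertex_on_short_cycle_if_L_free:
  assumes "\<not> has_L_subgraph V E"
  shows "every_vertex_on_short_cycle V E"
proof (rule ccontr)
  assume "\<not> every_vertex_on_short_cycle V E"
  then obtain v where "v \<in> V" and far: "\<And>a b. a \<in> N v \<Longrightarrow> b \<in> N v \<Longrightarrow> a \<noteq> b \<Longrightarrow>
      \<not> E a b \<and> \<not> (\<exists>w. w \<noteq> v \<and> E a w \<and> E b w)"
    unfolding every_vertex_on_short_cycle_def by blast
  obtain a b c where abc: "N v = {a, b, c}" "a \<noteq> b" "b \<noteq> c" "a \<noteq> c"
    using card_N[OF \<open>v \<in> V\<close>] by (auto simp: card_3_iff)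
  have Ev: "E v a" "E v b" "E v c" using abc(1) by (auto simp: in_N_iff[symmetric])
  have further: "\<exists>p q. N u = {v, p, q} \<and> p \<noteq> q \<and> p \<noteq> v \<and> q \<noteq> v" if "E v u" for u
  proof -
    have "u \<in> V" "v \<in> N u" using that adj_in_V adj_sym by (auto simp: in_N_iff)
    then show ?thesis using card_3_obtain_others[OF card_N] by metis
  qed
  obtain a1 a2 where A: "N a = {v, a1, a2}" "a1 \<noteq> a2" "a1 \<noteq> v" "a2 \<noteq> v"
    using further[OF Ev(1)] by blast
  obtain b1 b2 where B: "N b = {v, b1, b2}" "b1 \<noteq> b2" "b1 \<noteq> v" "b2 \<noteq> v"
    using further[OF Ev(2)] by blast
  obtain c1 c2 where C: "N c = {v, c1, c2}" "c1 \<noteq> c2" "c1 \<noteq> v" "c2 \<noteq> v"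
    using further[OF Ev(3)] by blast
  have E: "E a a1" "E a a2" "E b b1" "E b b2" "E c c1" "E c c2"
    using A(1) B(1) C(1) by (auto simp: in_N_iff[symmetric])
  have "a \<in> N v" "b \<in> N v" "c \<in> N v" using abc by auto
  note ab = far[OF this(1,2) abc(2)] and bc = far[OF this(2,3) abc(3)]
    and ac = far[OF this(1,3) abc(4)]
  have "b \<noteq> a1" "b \<noteq> a2" "c \<noteq> a1" "c \<noteq> a2" "a \<noteq> b1" "a \<noteq> b2" "c \<noteq> b1" "c \<noteq> b2"
    "a \<noteq> c1" "a \<noteq> c2" "b \<noteq> c1" "b \<noteq> c2"
    using E ab bc ac adj_sym by metis+
  moreover have "a1 \<noteq> b1" "a1 \<noteq> b2" "a2 \<noteq> b1" "a2 \<noteq> b2" "a1 \<noteq> c1" "a1 \<noteq> c2" "a2 \<noteq> c1"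
    "a2 \<noteq> c2" "b1 \<noteq> c1" "b1 \<noteq> c2" "b2 \<noteq> c1" "b2 \<noteq> c2"
    using ab bc ac E A B C by blast+
  ultimately have "distinct [v, a, b, c, a1, a2, b1, b2, c1, c2]"
    using abc A B C Ev E adj_neq by auto
  then have "has_L_subgraph V E" using Ev E by (rule has_L_subgraph_if_tree)
  with assms show False by contradiction
qed

end

lemma total_dominating_if_coupon_colouring:
  assumes "coupon_colouring V E col"
  shows "total_dominating V E {v \<in> V. col v = t}"
  unfolding total_dominating_def
proof (intro conjI ballI)
  fix v assume "v \<in> V"
  then obtain u u' where "u \<in> neighbours V E v" "u' \<in> neighbours V E v" "col u \<noteq> col u'"
    using assms unfolding coupon_colouring_def by blast
  then show "\<exists>u\<in>{v \<in> V. col v = t}. E v u"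
    by (cases "col u = t") (auto simp: neighbours_def)
qed simp

theorem theorem2p1:
  fixes V :: "'a set" and E :: "'a \<Rightarrow> 'a \<Rightarrow> bool"
  assumes "simple_graph V E" and "cubic V E" and "\<not> has_L_subgraph V E"
  shows "\<exists>S1 S2. S1 \<union> S2 = V \<and> S1 \<inter> S2 = {} \<and>
           total_dominating V E S1 \<and> total_dominating V E S2"
proof -
  interpret cubic_graph V E using assms(1,2) by unfold_locales
  obtain col where "coupon_colouring V E col"
    using coupon_colouring_exists[OF cubic_graph_axioms]
      every_vertex_on_short_cycle_if_L_free[OF assms(3)] by blast
  then have "total_dominating V E {v \<in> V. col v = True}" "total_dominating V E {v \<in> V. col v = False}"
    by (simp_all only: total_dominating_if_coupon_colouring)
  moreover have "{v \<in> V. col v = True} \<union> {v \<in> V. col v = False} = V"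
    "{v \<in> V. col v = True} \<inter> {v \<in> V. col v = False} = {}" by auto
  ultimately show ?thesis by blast
qed

end
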